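(* Let $T\subseteq\{0,1\}^n$ be nonempty, $\delta\in[0,1]$, $\varepsilon\ge0$, and let $f:\{0,1\}^n\to\mathbb{R}$ satisfy $f(x)=0$ for $x\notin T$ and $|f(x)|\le1+\varepsilon$ for $x\in T$. Define $\widetilde f(S):=\widehat f(S)\cdot 2^n/|T|$ for $S\subseteq[n]$. Then $$\sum_{S\subseteq[n]}\delta^{|S|}\,\widetilde f(S)^2\le(1+\varepsilon)^2\left(\frac{2^n}{|T|}\right)^{2\delta}.$$
   Context: Fourier coefficients: $\widehat f(S):=2^{-n}\sum_{x\in\{0,1\}^n}f(x)\chi_S(x)$ with $\chi_S(x)=(-1)^{\sum_{j\in S}x_j}$; the convention $0^0=1$ is used for $\delta=0$. *)

theory Defs
  imports "HOL-Analysis.Analysis"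
begin

text \<open>The Boolean cube {0,1}^n is represented by subsets of {..<n}: a point x
  is identified with the set of coordinates j where x_j = 1.\<close>

definition cube :: "nat \<Rightarrow> nat set set" where
  "cube n = Pow {..<n}"

definition chi :: "nat set \<Rightarrow> nat set \<Rightarrow> real" where
  "chi S x = (-1) ^ card (S \<inter> x)"

definition fourier :: "nat \<Rightarrow> (nat set \<Rightarrow> real) \<Rightarrow> nat set \<Rightarrow> real" where
  "fourier n f S = (\<Sum>x\<in>cube n. f x * chi S x) / 2 ^ n"

end

theory Submission
  imports Defs
begin

(* Up to the factor (2^n/|T|)^2, the left-hand side is sum_S delta^|S| hat f(S)^2, the squared
   2-norm of T_rho f for the noise operator with rho^2 = delta.  The Bonami-Beckner
   hypercontractive inequality bounds it by the squared p-norm of f for p = 1 + delta, which for f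
   supported on T and bounded by 1 + eps is at most (1 + eps)^2 (|T|/2^n)^(2/p); as
   2 - 2/p <= 2 delta the claim follows.  Hypercontractivity is proved by induction on n,
   splitting off the last coordinate: the step is Cauchy-Schwarz plus the two-point inequality
   ((x+y)/2)^2 + delta ((x-y)/2)^2 <= ((x^p+y^p)/2)^(2/p), which after writing x, y = s (1 +- t)
   reduces to (1+t)^p + (1-t)^p >= 2 + p (p-1) t^2 and Bernoulli's inequality. *)

lemma one_plus_mult_le_powr:
  fixes r z :: real
  assumes "1 \<le> r" "0 \<le> z"
  shows "1 + r * z \<le> (1 + z) powr r"
proof -
  let ?g = "\<lambda>w. (1 + w) powr r - r * w"
  have "?g 0 \<le> ?g z"
  proof (rule DERIV_nonneg_imp_increasing_open[OF assms(2)])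
    fix x :: real assume x: "0 < x" "x < z"
    have "(?g has_real_derivative r * ((1 + x) powr (r - 1) - 1)) (at x)"
      using x by (auto intro!: derivative_eq_intros simp: algebra_simps)
    moreover have "1 \<le> (1 + x) powr (r - 1)"
      using x assms by (simp add: ge_one_powr_ge_zero)
    ultimately show "\<exists>y. (?g has_real_derivative y) (at x) \<and> 0 \<le> y"
      using assms by auto
  qed (intro continuous_intros, auto)
  then show ?thesis by simp
qed

lemma powr_reflect_sum_ge_2:
  fixes q t :: real
  assumes "q \<le> 0" "\<bar>t\<bar> < 1"
  shows "2 \<le> (1 + t) powr q + (1 - t) powr q"
proof -
  have "1 \<le> (1 - t\<^sup>2) powr q"
    using powr_mono2'[OF assms(1), of "1 - t\<^sup>2" 1] assms(2) abs_square_less_1[of t] by simp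
  also have "(1 - t\<^sup>2) powr q = (1 + t) powr q * (1 - t) powr q"
    using assms(2) by (simp add: powr_mult[symmetric] power2_eq_square algebra_simps)
  finally have "1 \<le> sqrt ((1 + t) powr q * (1 - t) powr q)"
    by simp
  moreover have "sqrt ((1 + t) powr q * (1 - t) powr q) \<le> ((1 + t) powr q + (1 - t) powr q) / 2"
    by (intro arith_geo_mean_sqrt) auto
  ultimately show ?thesis by argo
qed

lemma powr_reflect_diff_ge:
  fixes r t :: real
  assumes r: "0 \<le> r" "r \<le> 1" and t: "0 \<le> t" "t < 1"
  shows "2 * r * t \<le> (1 + t) powr r - (1 - t) powr r"
proof -
  let ?g = "\<lambda>w. (1 + w) powr r - (1 - w) powr r - 2 * r * w"
  have "?g 0 \<le> ?g t"
  proof (rule DERIV_nonneg_imp_increasing_open[OF t(1)])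
    fix x :: real assume x: "0 < x" "x < t"
    have "(?g has_real_derivative r * ((1 + x) powr (r - 1) + (1 - x) powr (r - 1) - 2)) (at x)"
      using x t by (auto intro!: derivative_eq_intros simp: algebra_simps)
    moreover have "2 \<le> (1 + x) powr (r - 1) + (1 - x) powr (r - 1)"
      using powr_reflect_sum_ge_2[of "r - 1" x] r x t by simp
    ultimately show "\<exists>y. (?g has_real_derivative y) (at x) \<and> 0 \<le> y"
      using r by auto
  qed (use t in \<open>intro continuous_intros, auto\<close>)
  then show ?thesis by simp
qed

lemma powr_reflect_sum_ge:
  fixes p t :: real
  assumes p: "1 \<le> p" "p \<le> 2" and t: "\<bar>t\<bar> \<le> 1"
  shows "2 + p * (p - 1) * t\<^sup>2 \<le> (1 + t) powr p + (1 - t) powr p"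
proof -
  have reflect: "2 + p * (p - 1) * u\<^sup>2 \<le> (1 + u) powr p + (1 - u) powr p"
    if u: "0 \<le> u" "u \<le> 1" for u
  proof -
    let ?g = "\<lambda>w. (1 + w) powr p + (1 - w) powr p - p * (p - 1) * w\<^sup>2"
    have "?g 0 \<le> ?g u"
    proof (rule DERIV_nonneg_imp_increasing_open[OF u(1)])
      fix x :: real assume x: "0 < x" "x < u"
      have "(?g has_real_derivative
              p * ((1 + x) powr (p - 1) - (1 - x) powr (p - 1) - 2 * (p - 1) * x)) (at x)"
        using x u by (auto intro!: derivative_eq_intros simp: algebra_simps)
      moreover have "2 * (p - 1) * x \<le> (1 + x) powr (p - 1) - (1 - x) powr (p - 1)"
        using powr_reflect_diff_ge[of "p - 1" x] p x u by simp
      ultimately show "\<exists>y. (?g has_real_derivative y) (at x) \<and> 0 \<le> y"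
        using p by auto
    qed (use u p in \<open>intro continuous_intros continuous_on_powr', auto\<close>)
    then show ?thesis by simp
  qed
  show ?thesis
  proof (cases "0 \<le> t")
    case True
    then show ?thesis using reflect[of t] t by simp
  next
    case False
    then show ?thesis using reflect[of "- t"] t by simp
  qed
qed

lemma two_point_inequality:
  fixes p d x y :: real
  assumes p: "1 \<le> p" "p \<le> 2" and d: "0 \<le> d" "d \<le> p - 1" and xy: "0 \<le> x" "0 \<le> y"
  shows "((x + y) / 2)\<^sup>2 + d * ((x - y) / 2)\<^sup>2 \<le> ((x powr p + y powr p) / 2) powr (2 / p)"
proof (cases "x + y = 0")
  case True
  with xy have "x = 0" "y = 0" by auto
  then show ?thesis by simp
next
  case False
  define s where "s = (x + y) / 2"
  define t where "t = (x - y) / (x + y)"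
  define z where "z = p * (p - 1) * t\<^sup>2 / 2"
  have s: "0 < s" using False xy by (simp add: s_def)
  have t: "\<bar>t\<bar> \<le> 1" using False xy by (simp add: t_def divide_simps)
  have z: "0 \<le> z" using p by (simp add: z_def)
  have x: "x = s * (1 + t)" and y: "y = s * (1 - t)"
    using False by (auto simp: s_def t_def field_simps)
  have "((x + y) / 2)\<^sup>2 + d * ((x - y) / 2)\<^sup>2 = s\<^sup>2 * (1 + d * t\<^sup>2)"
    unfolding x y by (simp add: power2_eq_square algebra_simps)
  also have "\<dots> \<le> s\<^sup>2 * (1 + (2 / p) * z)"
    using d p by (intro mult_left_mono) (auto simp: z_def mult_right_mono)
  also have "\<dots> \<le> s\<^sup>2 * (1 + z) powr (2 / p)"
    using p z by (intro mult_left_mono one_plus_mult_le_powr) auto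
  also have "\<dots> = (s powr p * (1 + z)) powr (2 / p)"
    using s z p by (simp add: powr_mult powr_powr powr_numeral)
  also have "\<dots> \<le> ((x powr p + y powr p) / 2) powr (2 / p)"
  proof -
    have "x powr p = s powr p * (1 + t) powr p" "y powr p = s powr p * (1 - t) powr p"
      unfolding x y by (simp_all add: powr_mult)
    then have "x powr p + y powr p = s powr p * ((1 + t) powr p + (1 - t) powr p)"
      by (simp add: distrib_left)
    then have "s powr p * (1 + z) \<le> (x powr p + y powr p) / 2"
      using powr_reflect_sum_ge[OF p t] s by (simp add: z_def)
    then show ?thesis
      using p s z by (intro powr_mono2) auto
  qed
  finally show ?thesis .
qed

lemma finite_cube [simp]: "finite (cube n)"
  by (simp add: cube_def)

lemma card_cube: "card (cube n) = 2 ^ n"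
  by (simp add: cube_def card_Pow)

lemma sum_cube_Suc:
  "(\<Sum>x\<in>cube (Suc n). g x) = (\<Sum>x\<in>cube n. g x) + (\<Sum>x\<in>cube n. g (insert n x))"
proof -
  have "cube (Suc n) = cube n \<union> insert n ` cube n"
    by (simp add: cube_def lessThan_Suc Pow_insert)
  moreover have "cube n \<inter> insert n ` cube n = {}" and "inj_on (insert n) (cube n)"
    by (auto simp: cube_def inj_on_def)
  ultimately show ?thesis
    by (simp add: sum.union_disjoint sum.reindex)
qed

lemma chi_insert_right: "n \<notin> S \<Longrightarrow> chi S (insert n x) = chi S x"
  by (simp add: chi_def)

lemma chi_insert_left: "n \<notin> x \<Longrightarrow> chi (insert n S) x = chi S x"
  by (simp add: chi_def)

lemma chi_insert_both: "finite S \<Longrightarrow> n \<notin> S \<Longrightarrow> chi (insert n S) (insert n x) = - chi S x"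
  by (simp add: chi_def)

lemma fourier_Suc:
  assumes "S \<in> cube n"
  shows "fourier (Suc n) a S = (fourier n a S + fourier n (\<lambda>x. a (insert n x)) S) / 2"
proof -
  have "n \<notin> S"
    using assms by (auto simp: cube_def)
  then show ?thesis
    by (simp add: fourier_def sum_cube_Suc chi_insert_right add_divide_distrib)
qed

lemma fourier_Suc_insert:
  assumes "S \<in> cube n"
  shows "fourier (Suc n) a (insert n S) = (fourier n a S - fourier n (\<lambda>x. a (insert n x)) S) / 2"
proof -
  have "finite S" "n \<notin> S" "\<forall>x\<in>cube n. n \<notin> x"
    using assms by (auto simp: cube_def finite_subset)
  then show ?thesis
    by (simp add: fourier_def sum_cube_Suc chi_insert_left chi_insert_both sum_negf diff_divide_distrib)
qed

definition cube_mean :: "nat \<Rightarrow> (nat set \<Rightarrow> real) \<Rightarrow> real" where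
  "cube_mean n g = (\<Sum>x\<in>cube n. g x) / 2 ^ n"

lemma cube_mean_Suc: "cube_mean (Suc n) g = (cube_mean n g + cube_mean n (\<lambda>x. g (insert n x))) / 2"
  by (simp add: cube_mean_def sum_cube_Suc add_divide_distrib)

lemma cube_mean_le:
  assumes "T \<subseteq> cube n" "\<And>x. x \<in> cube n \<Longrightarrow> x \<notin> T \<Longrightarrow> g x = 0" "\<And>x. x \<in> T \<Longrightarrow> g x \<le> M"
  shows "cube_mean n g \<le> real (card T) / 2 ^ n * M"
proof -
  have "(\<Sum>x\<in>cube n. g x) = (\<Sum>x\<in>T. g x)"
    using assms(1,2) by (intro sum.mono_neutral_right) auto
  also have "\<dots> \<le> real (card T) * M"
    using sum_bounded_above[of T g M] assms(3) by simp
  finally show ?thesis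
    by (simp add: cube_mean_def divide_right_mono)
qed

definition noise_inner :: "real \<Rightarrow> nat \<Rightarrow> (nat set \<Rightarrow> real) \<Rightarrow> (nat set \<Rightarrow> real) \<Rightarrow> real" where
  "noise_inner d n a b = (\<Sum>S\<in>cube n. d ^ card S * fourier n a S * fourier n b S)"

lemma noise_inner_self_nonneg: "0 \<le> d \<Longrightarrow> 0 \<le> noise_inner d n a a"
  unfolding noise_inner_def by (intro sum_nonneg) (simp add: mult.assoc)

lemma noise_inner_Cauchy_Schwarz:
  assumes "0 \<le> d"
  shows "(noise_inner d n a b)\<^sup>2 \<le> noise_inner d n a a * noise_inner d n b b"
proof -
  define u where "u c S = sqrt (d ^ card S) * fourier n c S" for c S
  have "noise_inner d n a b = (\<Sum>S\<in>cube n. u a S * u b S)" for a b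
    unfolding noise_inner_def u_def using assms
    by (intro sum.cong) (auto simp: algebra_simps real_sqrt_mult[symmetric])
  then show ?thesis
    by (simp add: power2_eq_square Cauchy_Schwarz_ineq_sum[of "u a" "u b" "cube n", unfolded power2_eq_square])
qed

lemma noise_inner_Suc:
  fixes a :: "nat set \<Rightarrow> real" and n :: nat
  defines "b \<equiv> \<lambda>x. a (insert n x)"
  shows "noise_inner d (Suc n) a a
           = ((1 + d) * (noise_inner d n a a + noise_inner d n b b) + 2 * (1 - d) * noise_inner d n a b) / 4"
proof -
  have "noise_inner d (Suc n) a a
          = (\<Sum>S\<in>cube n. d ^ card S * (((fourier n a S + fourier n b S) / 2)\<^sup>2
                                      + d * ((fourier n a S - fourier n b S) / 2)\<^sup>2))"
  proof -
    have "finite S" "n \<notin> S" if "S \<in> cube n" for S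
      using that by (auto simp: cube_def finite_subset)
    then show ?thesis
      unfolding noise_inner_def sum_cube_Suc sum.distrib[symmetric] b_def
      by (intro sum.cong) (simp_all add: fourier_Suc fourier_Suc_insert power2_eq_square field_simps)
  qed
  also have "\<dots> = (\<Sum>S\<in>cube n. ((1 + d) * (d ^ card S * fourier n a S * fourier n a S
                                           + d ^ card S * fourier n b S * fourier n b S)
                                + 2 * (1 - d) * (d ^ card S * fourier n a S * fourier n b S)) / 4)"
    by (intro sum.cong refl) (simp add: power2_eq_square field_simps)
  also have "\<dots> = ((1 + d) * (noise_inner d n a a + noise_inner d n b b) + 2 * (1 - d) * noise_inner d n a b) / 4"
    unfolding noise_inner_def by (simp add: sum_divide_distrib[symmetric] sum.distrib sum_distrib_left distrib_left)
  finally show ?thesis .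
qed

theorem hypercontractive_inequality:
  fixes p d :: real
  assumes p: "1 \<le> p" "p \<le> 2" and d: "0 \<le> d" "d \<le> p - 1"
  shows "noise_inner d n a a \<le> cube_mean n (\<lambda>x. \<bar>a x\<bar> powr p) powr (2 / p)"
proof (induction n arbitrary: a)
  case 0
  have "(\<bar>a {}\<bar> powr p) powr (2 / p) = (a {})\<^sup>2"
    using p by (simp add: powr_powr powr_numeral)
  then show ?case
    by (simp add: noise_inner_def fourier_def cube_mean_def cube_def chi_def power2_eq_square)
next
  case (Suc n)
  define b where "b x = a (insert n x)" for x
  define pnorm where "pnorm c = cube_mean n (\<lambda>x. \<bar>c x\<bar> powr p) powr (1 / p)" for c
  have pnorm_nonneg: "0 \<le> pnorm c" for c
    by (simp add: pnorm_def)
  have pnorm_sq: "(pnorm c)\<^sup>2 = cube_mean n (\<lambda>x. \<bar>c x\<bar> powr p) powr (2 / p)" for c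
    by (simp add: pnorm_def power2_eq_square powr_add[symmetric])
  have pnorm_powr: "pnorm c powr p = cube_mean n (\<lambda>x. \<bar>c x\<bar> powr p)" for c
    using p by (simp add: pnorm_def powr_powr cube_mean_def sum_nonneg)
  have A: "noise_inner d n a a \<le> (pnorm a)\<^sup>2" and B: "noise_inner d n b b \<le> (pnorm b)\<^sup>2"
    using Suc.IH by (simp_all add: pnorm_sq)
  have C: "noise_inner d n a b \<le> pnorm a * pnorm b"
  proof (rule power2_le_imp_le)
    have "(noise_inner d n a b)\<^sup>2 \<le> noise_inner d n a a * noise_inner d n b b"
      using noise_inner_Cauchy_Schwarz[OF d(1)] .
    also have "\<dots> \<le> (pnorm a * pnorm b)\<^sup>2"
      unfolding power_mult_distrib using A B noise_inner_self_nonneg[OF d(1)]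
      by (intro mult_mono) auto
    finally show "(noise_inner d n a b)\<^sup>2 \<le> (pnorm a * pnorm b)\<^sup>2" .
  qed (simp add: pnorm_nonneg)
  have "noise_inner d (Suc n) a a
          = ((1 + d) * (noise_inner d n a a + noise_inner d n b b) + 2 * (1 - d) * noise_inner d n a b) / 4"
    unfolding b_def by (rule noise_inner_Suc)
  also have "\<dots> \<le> ((1 + d) * ((pnorm a)\<^sup>2 + (pnorm b)\<^sup>2) + 2 * (1 - d) * (pnorm a * pnorm b)) / 4"
    using A B C d p by (intro divide_right_mono add_mono mult_left_mono) auto
  also have "\<dots> = ((pnorm a + pnorm b) / 2)\<^sup>2 + d * ((pnorm a - pnorm b) / 2)\<^sup>2"
    by (simp add: power2_eq_square field_simps)
  also have "\<dots> \<le> ((pnorm a powr p + pnorm b powr p) / 2) powr (2 / p)"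
    using two_point_inequality[OF p d pnorm_nonneg pnorm_nonneg] .
  also have "\<dots> = cube_mean (Suc n) (\<lambda>x. \<bar>a x\<bar> powr p) powr (2 / p)"
    by (simp add: pnorm_powr cube_mean_Suc b_def)
  finally show ?case .
qed

lemma noise_inner_le_density:
  fixes \<delta> M :: real
  assumes "T \<subseteq> cube n" "0 \<le> \<delta>" "\<delta> \<le> 1" "0 \<le> M"
    and "\<And>x. x \<in> cube n \<Longrightarrow> x \<notin> T \<Longrightarrow> f x = 0" "\<And>x. x \<in> T \<Longrightarrow> \<bar>f x\<bar> \<le> M"
  shows "noise_inner \<delta> n f f \<le> M\<^sup>2 * (real (card T) / 2 ^ n) powr (2 / (1 + \<delta>))"
proof -
  define p where "p = 1 + \<delta>"
  have p: "1 \<le> p" "p \<le> 2" "\<delta> \<le> p - 1"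
    using assms(2,3) by (simp_all add: p_def)
  have "noise_inner \<delta> n f f \<le> cube_mean n (\<lambda>x. \<bar>f x\<bar> powr p) powr (2 / p)"
    using hypercontractive_inequality[OF p(1,2) assms(2) p(3)] .
  also have "\<dots> \<le> (real (card T) / 2 ^ n * M powr p) powr (2 / p)"
    using assms(1,5,6) p
    by (intro powr_mono2 cube_mean_le) (auto simp: cube_mean_def sum_nonneg intro: powr_mono2)
  also have "\<dots> = (real (card T) / 2 ^ n) powr (2 / p) * (M powr p) powr (2 / p)"
    by (rule powr_mult)
  also have "\<dots> = M\<^sup>2 * (real (card T) / 2 ^ n) powr (2 / p)"
    using assms(4) p by (simp add: powr_powr powr_numeral)
  finally show ?thesis
    by (simp add: p_def)
qed

theorem mainTheorem5:
  fixes n :: nat and T :: "nat set set" and f :: "nat set \<Rightarrow> real"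
    and \<delta> \<epsilon> :: real
  assumes "T \<subseteq> cube n" and "T \<noteq> {}"
    and "0 \<le> \<delta>" and "\<delta> \<le> 1" and "0 \<le> \<epsilon>"
    and "\<And>x. x \<in> cube n \<Longrightarrow> x \<notin> T \<Longrightarrow> f x = 0"
    and "\<And>x. x \<in> T \<Longrightarrow> \<bar>f x\<bar> \<le> 1 + \<epsilon>"
  shows "(\<Sum>S\<in>cube n. \<delta> ^ card S * (fourier n f S * 2 ^ n / real (card T))\<^sup>2)
           \<le> (1 + \<epsilon>)\<^sup>2 * (2 ^ n / real (card T)) powr (2 * \<delta>)"
proof -
  define N where "N = 2 ^ n / real (card T)"
  have "0 < card T" "card T \<le> 2 ^ n"
    using assms(1,2) card_mono[OF finite_cube assms(1)] finite_subset[OF assms(1)]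
    by (auto simp: card_cube card_gt_0_iff)
  then have N: "1 \<le> N"
    by (simp add: N_def)
  have "(\<Sum>S\<in>cube n. \<delta> ^ card S * (fourier n f S * 2 ^ n / real (card T))\<^sup>2)
          = N\<^sup>2 * noise_inner \<delta> n f f"
    unfolding noise_inner_def sum_distrib_left N_def
    by (intro sum.cong refl) (simp add: power2_eq_square field_simps)
  also have "\<dots> \<le> N\<^sup>2 * ((1 + \<epsilon>)\<^sup>2 * (1 / N) powr (2 / (1 + \<delta>)))"
    using noise_inner_le_density[OF assms(1,3,4) _ assms(6,7)] assms(5)
    by (intro mult_left_mono) (auto simp: N_def)
  also have "\<dots> = (1 + \<epsilon>)\<^sup>2 * N powr (2 - 2 / (1 + \<delta>))"
    using N by (simp add: powr_diff powr_divide powr_numeral field_simps)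
  also have "\<dots> \<le> (1 + \<epsilon>)\<^sup>2 * N powr (2 * \<delta>)"
    using N assms(3) by (intro mult_left_mono powr_mono) (auto simp: field_simps)
  finally show ?thesis
    by (simp add: N_def)
qed

end
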